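(* Let $n_0$ be a positive integer, let $X$ be a semiprime complex Banach algebra with identity, and let $p,q,\theta$ be real numbers with $p<\tfrac32$, $q<\tfrac12$. Suppose $f:X\to X$ satisfies $$\|f(xyx)-f(x)yx-xf(y)x-xyf(x)\|\le\theta\|x\|^p\|y\|^p,$$ $$\|f(2\mu x+\mu y)+f(\mu x+2\mu y)-\mu[f(3x)+f(3y)]\|\le\theta\|x\|^q\|y\|^q$$ for all $x,y\in X$ and all $\mu\in\mathbb{T}^1_{n_0}$. Then $f$ is a linear derivation.
   Context: $\mathbb{T}^1_{n_0}:=\{e^{i\theta}: 0\le\theta\le 2\pi/n_0\}$. An algebra $X$ is semiprime if $aXa=\{0\}$ for some $a\in X$ implies $a=0$. A linear derivation is a $\mathbb{C}$-linear map $D:X\to X$ with $D(xy)=D(x)y+xD(y)$ for all $x,y\in X$. *)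

theory Defs
  imports "HOL-Analysis.Analysis"
begin

text \<open>Complex Banach algebra with identity: a real Banach algebra with a unit
(no normalisation of the norm of the unit is imposed) together with a complex
scalar multiplication extending the real one, making it a complex normed
algebra.\<close>

class complex_banach_algebra_1 = real_normed_algebra + ring_1 + banach +
  fixes scaleC :: "complex \<Rightarrow> 'a \<Rightarrow> 'a" (infixr \<open>*\<^sub>C\<close> 75)
  assumes scaleC_add_right: "c *\<^sub>C (x + y) = c *\<^sub>C x + c *\<^sub>C y"
    and scaleC_add_left: "(b + c) *\<^sub>C x = b *\<^sub>C x + c *\<^sub>C x"
    and scaleC_scaleC: "b *\<^sub>C (c *\<^sub>C x) = (b * c) *\<^sub>C x"
    and scaleC_one: "(1::complex) *\<^sub>C x = x"
    and scaleR_scaleC: "scaleR r x = (complex_of_real r) *\<^sub>C x"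
    and norm_scaleC: "norm (c *\<^sub>C x) = cmod c * norm x"
    and mult_scaleC_left: "(c *\<^sub>C x) * y = c *\<^sub>C (x * y)"
    and mult_scaleC_right: "x * (c *\<^sub>C y) = c *\<^sub>C (x * y)"

definition semiprime_ring :: "'a::ring itself \<Rightarrow> bool" where
  "semiprime_ring _ \<longleftrightarrow> (\<forall>a::'a. (\<forall>x::'a. a * x * a = 0) \<longrightarrow> a = 0)"

definition circle_sector :: "nat \<Rightarrow> complex set" where
  "circle_sector n0 = {cis t | t. 0 \<le> t \<and> t \<le> 2 * pi / real n0}"

definition linear_derivation :: "('a::complex_banach_algebra_1 \<Rightarrow> 'a) \<Rightarrow> bool" where
  "linear_derivation D \<longleftrightarrow>
     (\<forall>x y. D (x + y) = D x + D y) \<and>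
     (\<forall>c x. D (c *\<^sub>C x) = c *\<^sub>C D x) \<and>
     (\<forall>x y. D (x * y) = D x * y + x * D y)"

end

theory Submission
  imports Defs
begin

(* Taking \<mu> = 1 in the second inequality, f approximately solves f(2x + y) + f(x + 2y) = f(3x) + f(3y),
   so Hyers' sequence 2^-n f(2^n x) converges to an additive A with |f x - A x| = O(|x|^2q), 2q < 1.
   Replacing x, y by n x, n y in the first inequality, the error terms grow like n^2p, n^6q, n^(2q+2),
   strictly slower than the n^3 by which the Jordan triple defect of A scales; so A is an exact Jordan
   triple derivation.  Replacing x by n 1 then bounds n^2 |f y - A y| by O(n^p + n^4q + n^(2q+1)),
   so f = A.  With y = 0 the second inequality gives f(\<mu> z) = \<mu> f z on the circle sector, which
   spreads multiplicatively to the unit circle, through r = cis s + cis (2 pi - s) to real scalars,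
   and hence to all complex scalars.  Finally, a Jordan triple derivation of a 2-torsion-free
   semiprime ring is a derivation (Bresar). *)

section \<open>Jordan triple derivations of semiprime rings\<close>

lemma semiprime_ringD:
  assumes "semiprime_ring TYPE('a::ring)" and "\<And>x. a * x * a = 0"
  shows "a = (0::'a)"
  using assms unfolding semiprime_ring_def by blast

lemma semiprime_sandwich_anticommute_zero:
  fixes p q :: "'a::ring"
  assumes sp: "semiprime_ring TYPE('a)" and tf: "\<And>a::'a. a + a = 0 \<Longrightarrow> a = 0"
    and anti: "\<And>x. p * x * q + q * x * p = 0"
  shows "p * x * q = 0"
proof (rule semiprime_ringD[OF sp])
  fix y
  have qp: "q * z * p = - (p * z * q)" for z
    using anti[of z] by (simp add: eq_neg_iff_add_eq_0 add.commute)
  have "(p*x*q) * y * (p*x*q) = p*x*(q*y*p)*x*q" by (simp add: mult.assoc)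
  also have "\<dots> = - ((p*x)*(p*(y*q*x)*q))"
    by (simp only: qp[of y] mult_minus_left mult_minus_right) (simp add: mult.assoc)
  also have "\<dots> = (p*x)*(q*(y*q*x)*p)" by (simp add: qp[of "y*q*x"])
  also have "\<dots> = (p*x*q)*y*(q*x*p)" by (simp add: mult.assoc)
  also have "\<dots> = - ((p*x*q) * y * (p*x*q))" by (simp add: qp)
  finally show "(p*x*q) * y * (p*x*q) = 0"
    using tf[of "(p*x*q) * y * (p*x*q)"] by (simp add: eq_neg_iff_add_eq_0)
qed

lemma semiprime_sandwich_polarize:
  fixes P Q :: "'b::ab_group_add \<Rightarrow> 'a::ring"
  assumes sp: "semiprime_ring TYPE('a)"
    and P: "\<And>a c. P (a + c) = P a + P c" and Q: "\<And>a c. Q (a + c) = Q a + Q c"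
    and PQ: "\<And>a x. P a * x * Q a = 0" and QP: "\<And>a x. Q a * x * P a = 0"
  shows "P a * x * Q c = 0"
proof (rule semiprime_ringD[OF sp])
  fix y
  have "P (a + c) * x * Q (a + c) = 0" by (rule PQ)
  then have swap: "P a * x * Q c = - (P c * x * Q a)"
    using PQ[of a x] PQ[of c x] by (simp add: P Q algebra_simps eq_neg_iff_add_eq_0)
  have "(P a * x * Q c) * y * (P a * x * Q c) = - (P c * x * Q a) * y * (P a * x * Q c)"
    by (simp only: swap)
  also have "\<dots> = - (P c * x * (Q a * y * P a) * x * Q c)" by (simp add: mult.assoc)
  finally show "(P a * x * Q c) * y * (P a * x * Q c) = 0" by (simp add: QP)
qed

lemma semiprime_central_if_annihilates_commutators:
  fixes u :: "'a::ring"
  assumes sp: "semiprime_ring TYPE('a)" and ann: "\<And>x r. u * x * (u * r - r * u) = 0"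
  shows "u * r = r * u"
proof -
  have "u * r - r * u = 0"
  proof (rule semiprime_ringD[OF sp])
    fix y
    have "(u*r - r*u) * y * (u*r - r*u) = u*(r*y)*(u*r - r*u) - r*(u*y*(u*r - r*u))"
      by (simp add: algebra_simps)
    also have "\<dots> = 0" by (simp only: ann mult_zero_right diff_self)
    finally show "(u*r - r*u) * y * (u*r - r*u) = 0" .
  qed
  then show ?thesis by simp
qed

lemma semiprime_central_square_zero:
  fixes u :: "'a::ring"
  assumes sp: "semiprime_ring TYPE('a)" and central: "\<And>r. u * r = r * u" and "u * u = 0"
  shows "u = 0"
proof (rule semiprime_ringD[OF sp])
  fix y
  have "u * y * u = u * (u * y)" by (simp only: central[of y, symmetric] mult.assoc)
  also have "\<dots> = 0" by (simp only: mult.assoc[symmetric] \<open>u * u = 0\<close> mult_zero_left)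
  finally show "u * y * u = 0" .
qed

locale semiprime_jordan_triple_derivation = additive d for d :: "'a::ring_1 \<Rightarrow> 'a" +
  assumes semiprime: "semiprime_ring TYPE('a)"
    and two_torsion_free: "\<And>a::'a. a + a = 0 \<Longrightarrow> a = 0"
    and triple: "d (x * y * x) = d x * y * x + x * d y * x + x * y * d x"
begin

lemma one: "d 1 = 0"
proof -
  have "d 1 = d 1 + d 1 + d 1" using triple[of 1 1] by simp
  then have "d 1 + d 1 = 0" by (simp add: add.assoc)
  then show ?thesis by (rule two_torsion_free)
qed

lemma square: "d (x * x) = d x * x + x * d x"
  using triple[of x 1] by (simp add: one)

lemma jordan_product: "d (x * y + y * x) = d x * y + x * d y + d y * x + y * d x"
proof -
  have e: "x * y + y * x = (x + y) * (x + y) - x * x - y * y" by (simp add: algebra_simps)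
  show ?thesis unfolding e diff square add by (simp add: algebra_simps)
qed

lemma triple_product:
  "d (a * b * c + c * b * a) = d a * b * c + a * d b * c + a * b * d c + d c * b * a
      + c * d b * a + c * b * d a"
proof -
  have e: "a * b * c + c * b * a = (a + c) * b * (a + c) - a * b * a - c * b * c"
    by (simp add: algebra_simps)
  show ?thesis unfolding e diff triple add by (simp add: algebra_simps)
qed

definition defect :: "'a \<Rightarrow> 'a \<Rightarrow> 'a" where
  "defect a b = d (a * b) - d a * b - a * d b"

lemma defect_swap: "defect b a = - defect a b"
  using jordan_product[of a b] by (simp add: defect_def add algebra_simps)

lemma defect_add_left: "defect (a + c) b = defect a b + defect c b"
  and defect_add_right: "defect a (b + c) = defect a b + defect a c"
  by (simp_all add: defect_def add algebra_simps)

lemma defect_commutator_anticommute: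
  "defect a b * x * (a * b - b * a) + (a * b - b * a) * x * defect a b = 0"
proof -
  \<comment> \<open>Expand d of (ab)x(ba) + (ba)x(ab) = a(bxb)a + b(axa)b in two ways.\<close>
  define u where "u = defect a b"
  have dab: "d (a * b) = u + d a * b + a * d b"
    and dba: "d (b * a) = - u + d b * a + b * d a"
    using defect_swap[of a b] by (simp_all add: u_def defect_def algebra_simps)
  have "(a * b) * x * (b * a) + (b * a) * x * (a * b) = a * (b * x * b) * a + b * (a * x * a) * b"
    by (simp add: mult.assoc)
  then have "d ((a * b) * x * (b * a) + (b * a) * x * (a * b))
      = d (a * (b * x * b) * a) + d (b * (a * x * a) * b)"
    by (simp only: add)
  then have expand: "d (a * b) * x * (b * a) + (a * b) * d x * (b * a) + (a * b) * x * d (b * a)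
      + d (b * a) * x * (a * b) + (b * a) * d x * (a * b) + (b * a) * x * d (a * b)
    = d a * (b * x * b) * a + a * (d b * x * b + b * d x * b + b * x * d b) * a
      + a * (b * x * b) * d a
      + (d b * (a * x * a) * b + b * (d a * x * a + a * d x * a + a * x * d a) * b
        + b * (a * x * a) * d b)"
    by (simp only: triple_product[of "a * b" x "b * a"] triple)
  have "u * x * (a * b - b * a) + (a * b - b * a) * x * u
    = (d a * (b * x * b) * a + a * (d b * x * b + b * d x * b + b * x * d b) * a
      + a * (b * x * b) * d a
      + (d b * (a * x * a) * b + b * (d a * x * a + a * d x * a + a * x * d a) * b
        + b * (a * x * a) * d b))
    - (d (a * b) * x * (b * a) + (a * b) * d x * (b * a) + (a * b) * x * d (b * a)
      + d (b * a) * x * (a * b) + (b * a) * d x * (a * b) + (b * a) * x * d (a * b))"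
    unfolding dab dba by (simp add: algebra_simps)
  also have "\<dots> = 0" by (simp only: expand diff_self)
  finally show ?thesis by (simp only: u_def)
qed

lemma defect_annihilates_own_commutator:
  "defect a b * x * (a * b - b * a) = 0" "(a * b - b * a) * x * defect a b = 0"
  using semiprime_sandwich_anticommute_zero[OF semiprime two_torsion_free
      defect_commutator_anticommute]
    semiprime_sandwich_anticommute_zero[OF semiprime two_torsion_free,
      of "a * b - b * a" "defect a b"]
    defect_commutator_anticommute[of a b]
  by (simp_all add: add.commute)

lemma defect_annihilates_commutators:
  "defect a b * x * (c * e - e * c) = 0" "(c * e - e * c) * x * defect a b = 0"
proof -
  have commutator_add_left: "(a + c) * b - b * (a + c) = (a * b - b * a) + (c * b - b * c)"
    and commutator_add_right: "c * (a + b) - (a + b) * c = (c * a - a * c) + (c * b - b * c)"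
    for a b c :: 'a by (simp_all add: algebra_simps)
  have left: "defect a b * x * (c * b - b * c) = 0" "(c * b - b * c) * x * defect a b = 0"
    for a b c x
    using semiprime_sandwich_polarize[where P = "\<lambda>a. defect a b" and Q = "\<lambda>a. a * b - b * a",
        OF semiprime defect_add_left commutator_add_left defect_annihilates_own_commutator]
      semiprime_sandwich_polarize[where Q = "\<lambda>a. defect a b" and P = "\<lambda>a. a * b - b * a",
        OF semiprime commutator_add_left defect_add_left defect_annihilates_own_commutator(2,1)]
    by blast+
  show "defect a b * x * (c * e - e * c) = 0" "(c * e - e * c) * x * defect a b = 0"
    using semiprime_sandwich_polarize[where P = "\<lambda>b. defect a b" and Q = "\<lambda>b. c * b - b * c",
        OF semiprime defect_add_right commutator_add_right left]
      semiprime_sandwich_polarize[where Q = "\<lambda>b. defect a b" and P = "\<lambda>b. c * b - b * c",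
        OF semiprime commutator_add_right defect_add_right left(2,1)]
    by blast+
qed

lemma defect_central: "defect a b * r = r * defect a b"
  by (rule semiprime_central_if_annihilates_commutators[OF semiprime
        defect_annihilates_commutators(1)])

lemma defect_cube_zero: "defect a b * defect a b * defect a b = 0"
proof -
  \<comment> \<open>With u = defect a b and c = ab - ba: 2u = d c - [d a, b] - [a, d b], and u kills both
    commutators, so u (u + u) = u (d c); the Jordan identity for u c + c u = 0 gives
    u (u (d c)) = 0.\<close>
  define u where "u = defect a b"
  define c where "c = a * b - b * a"
  have central: "u * r = r * u" for r
    unfolding u_def by (rule defect_central)
  have ann: "u * x * (c' * e - e * c') = 0" for x c' e
    unfolding u_def by (rule defect_annihilates_commutators)
  have uc: "u * c = 0" and cu: "c * u = 0"
    using ann[of 1 a b] central[of c] by (simp_all add: c_def)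
  have two_u: "u + u = d c - (d a * b - b * d a) - (a * d b - d b * a)"
    using defect_swap[of a b] by (simp add: c_def u_def defect_def diff algebra_simps)
  have u_double: "u * (u + u) = u * d c"
  proof -
    have "u * (u + u) = u * d c - u * (d a * b - b * d a) - u * (a * d b - d b * a)"
      unfolding two_u by (simp only: right_diff_distrib)
    then show ?thesis using ann[of 1 "d a" b] ann[of 1 a "d b"] by simp
  qed
  have "d u * c + u * d c + d c * u + c * d u = 0"
    using jordan_product[of u c] uc cu by (simp add: zero)
  then have "u * (d u * c) + u * (u * d c) + u * (d c * u) + u * (c * d u) = 0"
    by (simp add: distrib_left[symmetric])
  moreover have "u * (d u * c) = 0" using ann[of "d u" a b] by (simp add: c_def mult.assoc)
  moreover have "u * (c * d u) = 0" by (simp add: mult.assoc[symmetric] uc)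
  moreover have "u * (d c * u) = u * (u * d c)" by (simp only: central[of "d c"])
  ultimately have "u * (u * d c) + u * (u * d c) = 0" by simp
  then have udc: "u * (u * d c) = 0" by (rule two_torsion_free)
  have "u * u * u + u * u * u = u * (u * (u + u))" by (simp only: distrib_left mult.assoc)
  also have "\<dots> = 0" by (simp only: u_double udc)
  finally show ?thesis unfolding u_def by (rule two_torsion_free)
qed

lemma defect_zero: "defect a b = 0"
proof -
  define u where "u = defect a b"
  have "u * u = 0"
  proof (rule semiprime_central_square_zero[OF semiprime])
    show "u * u * r = r * (u * u)" for r by (metis u_def defect_central mult.assoc)
    show "u * u * (u * u) = 0"
      using defect_cube_zero[of a b] by (simp only: u_def mult.assoc[symmetric] mult_zero_left)
  qed
  then show ?thesis unfolding u_def
    by (rule semiprime_central_square_zero[OF semiprime defect_central])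
qed

lemma derivation: "d (x * y) = d x * y + x * d y"
  using defect_zero[of x y] by (simp add: defect_def diff_eq_eq add.commute)

end

lemma derivation_of_jordan_triple_derivation:
  fixes d :: "'a::{ring_1, real_vector} \<Rightarrow> 'a"
  assumes "semiprime_ring TYPE('a)" and "\<And>x y. d (x + y) = d x + d y"
    and "\<And>x y. d (x * y * x) = d x * y * x + x * d y * x + x * y * d x"
  shows "d (x * y) = d x * y + x * d y"
proof -
  have "a = 0" if "a + a = 0" for a :: 'a using that by (simp add: scaleR_2[symmetric])
  then interpret semiprime_jordan_triple_derivation d using assms by unfold_locales blast+
  show ?thesis by (rule derivation)
qed

section \<open>Hyers--Ulam stability of the equation f(2x + y) + f(x + 2y) = f(3x) + f(3y)\<close>

lemma powr_two_power_scaled: "(1 / 2 ^ n) * ((2::real) ^ n) powr s = (2 powr (s - 1)) ^ n"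
proof -
  have "(1 / 2 ^ n) * ((2::real) ^ n) powr s = 2 powr (- real n) * 2 powr (real n * s)"
    by (simp add: powr_realpow[symmetric] powr_powr powr_minus divide_inverse)
  also have "\<dots> = 2 powr (real n * (s - 1))" by (simp add: powr_add[symmetric] algebra_simps)
  also have "\<dots> = (2 powr (s - 1)) ^ n" by (simp add: powr_power)
  finally show ?thesis .
qed

lemma geometric_increments_converge:
  fixes a :: "nat \<Rightarrow> 'a::banach"
  assumes inc: "\<And>n. norm (a (Suc n) - a n) \<le> C * r ^ n" and r: "0 \<le> r" "r < 1"
  shows "\<exists>L. a \<longlonglongrightarrow> L \<and> norm (a 0 - L) \<le> C / (1 - r)"
proof -
  have geom: "summable (\<lambda>n. C * r ^ n)" using r by (simp add: summable_geometric)
  have incs: "summable (\<lambda>n. a (Suc n) - a n)"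
    by (rule summable_comparison_test'[OF geom]) (use inc in auto)
  have "(\<lambda>n. (\<Sum>i<n. a (Suc i) - a i) + a 0) \<longlonglongrightarrow> (\<Sum>n. a (Suc n) - a n) + a 0"
    by (intro tendsto_add summable_LIMSEQ[OF incs] tendsto_const)
  then have lim: "a \<longlonglongrightarrow> (\<Sum>n. a (Suc n) - a n) + a 0" by (simp add: sum_lessThan_telescope)
  have "norm (\<Sum>n. a (Suc n) - a n) \<le> (\<Sum>n. C * r ^ n)" by (rule norm_suminf_le[OF inc geom])
  also have "\<dots> = C / (1 - r)" using r by (simp add: suminf_mult suminf_geometric)
  finally show ?thesis using lim by auto
qed

definition hyers_limit :: "('a::real_normed_vector \<Rightarrow> 'b::real_normed_vector) \<Rightarrow> 'a \<Rightarrow> 'b" where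
  "hyers_limit f x = lim (\<lambda>n. (1 / 2 ^ n) *\<^sub>R f ((2 ^ n) *\<^sub>R x))"

lemma hyers_limit:
  fixes f :: "'a::real_normed_vector \<Rightarrow> 'b::banach"
  assumes s: "s < 1" and doubling: "\<And>x. norm (f (2 *\<^sub>R x) - 2 *\<^sub>R f x) \<le> K * norm x powr s"
  shows "(\<lambda>n. (1 / 2 ^ n) *\<^sub>R f ((2 ^ n) *\<^sub>R x)) \<longlonglongrightarrow> hyers_limit f x"
    and "norm (f x - hyers_limit f x) \<le> K / (2 - 2 powr s) * norm x powr s"
proof -
  define a where "a n = (1 / 2 ^ n) *\<^sub>R f ((2 ^ n) *\<^sub>R x)" for n
  define r where "r = (2::real) powr (s - 1)"
  have r: "0 \<le> r" "r < 1" unfolding r_def using s by (auto intro: powr_less_one)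
  have "norm (a (Suc n) - a n) \<le> (K / 2 * norm x powr s) * r ^ n" for n
  proof -
    define X where "X = (2 ^ n) *\<^sub>R x"
    have "a (Suc n) - a n = (1 / 2 ^ Suc n) *\<^sub>R (f (2 *\<^sub>R X) - 2 *\<^sub>R f X)"
      unfolding a_def X_def by (simp add: algebra_simps)
    then have "norm (a (Suc n) - a n) = (1 / 2 ^ Suc n) * norm (f (2 *\<^sub>R X) - 2 *\<^sub>R f X)"
      by simp
    also have "\<dots> \<le> (1 / 2 ^ Suc n) * (K * norm X powr s)"
      by (intro mult_left_mono doubling) simp
    also have "\<dots> = K / 2 * norm x powr s * ((1 / 2 ^ n) * ((2::real) ^ n) powr s)"
      unfolding X_def by (simp add: powr_mult)
    finally show ?thesis unfolding powr_two_power_scaled r_def .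
  qed
  then obtain L where L: "a \<longlonglongrightarrow> L" "norm (a 0 - L) \<le> K / 2 * norm x powr s / (1 - r)"
    using geometric_increments_converge r by blast
  then have "L = hyers_limit f x" unfolding hyers_limit_def a_def[symmetric] by (simp add: limI)
  then show "(\<lambda>n. (1 / 2 ^ n) *\<^sub>R f ((2 ^ n) *\<^sub>R x)) \<longlonglongrightarrow> hyers_limit f x"
    using L(1) unfolding a_def by simp
  have "2 - 2 powr s = 2 * (1 - r)" unfolding r_def by (simp add: powr_diff)
  then show "norm (f x - hyers_limit f x) \<le> K / (2 - 2 powr s) * norm x powr s"
    using L(2) \<open>L = hyers_limit f x\<close> by (simp add: a_def)
qed

lemma limit_of_scaled_doubling:
  fixes f A :: "'a::real_normed_vector \<Rightarrow> 'b::real_normed_vector"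
  assumes conv: "\<And>x. (\<lambda>n. (1 / 2 ^ n) *\<^sub>R f ((2 ^ n) *\<^sub>R x)) \<longlonglongrightarrow> A x"
  shows "A (2 *\<^sub>R x) = 2 *\<^sub>R A x"
proof -
  have "(\<lambda>n. (1 / 2 ^ n) *\<^sub>R f ((2 ^ n) *\<^sub>R (2 *\<^sub>R x)))
      = (\<lambda>n. 2 *\<^sub>R ((1 / 2 ^ Suc n) *\<^sub>R f ((2 ^ Suc n) *\<^sub>R x)))"
    by (simp add: mult.commute)
  moreover have "(\<lambda>n. 2 *\<^sub>R ((1 / 2 ^ Suc n) *\<^sub>R f ((2 ^ Suc n) *\<^sub>R x))) \<longlonglongrightarrow> 2 *\<^sub>R A x"
    by (intro tendsto_scaleR tendsto_const LIMSEQ_Suc conv)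
  ultimately show ?thesis using LIMSEQ_unique[OF conv[of "2 *\<^sub>R x"]] by metis
qed

lemma limit_solves_equation:
  fixes f A :: "'a::real_normed_vector \<Rightarrow> 'b::real_normed_vector"
  assumes conv: "\<And>x. (\<lambda>n. (1 / 2 ^ n) *\<^sub>R f ((2 ^ n) *\<^sub>R x)) \<longlonglongrightarrow> A x"
    and q: "q < 1/2"
    and approx: "\<And>x y. norm (f (2 *\<^sub>R x + y) + f (x + 2 *\<^sub>R y) - f (3 *\<^sub>R x) - f (3 *\<^sub>R y))
      \<le> T * norm x powr q * norm y powr q"
  shows "A (2 *\<^sub>R x + y) + A (x + 2 *\<^sub>R y) = A (3 *\<^sub>R x) + A (3 *\<^sub>R y)"
proof -
  define a where "a n z = (1 / 2 ^ n) *\<^sub>R f ((2 ^ n) *\<^sub>R z)" for n z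
  define b where "b n = a n (2 *\<^sub>R x + y) + a n (x + 2 *\<^sub>R y) - a n (3 *\<^sub>R x) - a n (3 *\<^sub>R y)" for n
  define r where "r = (2::real) powr (2 * q - 1)"
  have r: "0 \<le> r" "r < 1" unfolding r_def using q by (auto intro: powr_less_one)
  have "b \<longlonglongrightarrow> A (2 *\<^sub>R x + y) + A (x + 2 *\<^sub>R y) - A (3 *\<^sub>R x) - A (3 *\<^sub>R y)"
    unfolding b_def a_def by (intro tendsto_intros conv)
  moreover have "b \<longlonglongrightarrow> 0"
  proof (rule Lim_null_comparison[OF always_eventually])
    show "\<forall>n. norm (b n) \<le> (T * norm x powr q * norm y powr q) * r ^ n"
    proof
      fix n
      define X where "X = (2 ^ n :: real) *\<^sub>R x"
      define Y where "Y = (2 ^ n :: real) *\<^sub>R y"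
      have "b n = (1 / 2 ^ n) *\<^sub>R (f (2 *\<^sub>R X + Y) + f (X + 2 *\<^sub>R Y) - f (3 *\<^sub>R X) - f (3 *\<^sub>R Y))"
        unfolding b_def a_def X_def Y_def by (simp add: algebra_simps)
      then have "norm (b n)
          = (1 / 2 ^ n) * norm (f (2 *\<^sub>R X + Y) + f (X + 2 *\<^sub>R Y) - f (3 *\<^sub>R X) - f (3 *\<^sub>R Y))"
        by simp
      also have "\<dots> \<le> (1 / 2 ^ n) * (T * norm X powr q * norm Y powr q)"
        by (intro mult_left_mono approx) simp
      also have "\<dots>
          = (T * norm x powr q * norm y powr q) * ((1 / 2 ^ n) * ((2::real) ^ n) powr (2 * q))"
        unfolding X_def Y_def by (simp add: powr_mult powr_add[symmetric] algebra_simps)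
      finally show "norm (b n) \<le> (T * norm x powr q * norm y powr q) * r ^ n"
        unfolding powr_two_power_scaled r_def .
    qed
    show "(\<lambda>n. (T * norm x powr q * norm y powr q) * r ^ n) \<longlonglongrightarrow> 0"
      using r by (intro tendsto_mult_right_zero LIMSEQ_power_zero) simp
  qed
  ultimately have "A (2 *\<^sub>R x + y) + A (x + 2 *\<^sub>R y) - A (3 *\<^sub>R x) - A (3 *\<^sub>R y) = 0"
    by (rule LIMSEQ_unique)
  then show ?thesis by (simp add: diff_diff_eq)
qed

lemma odd_part_bound:
  fixes f :: "'a::real_normed_vector \<Rightarrow> 'b::real_normed_vector"
  assumes approx: "\<And>x y. norm (f (2 *\<^sub>R x + y) + f (x + 2 *\<^sub>R y) - f (3 *\<^sub>R x) - f (3 *\<^sub>R y))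
      \<le> T * norm x powr q * norm y powr q"
    and f0: "f 0 = 0"
  shows "norm (f (2 *\<^sub>R w) - f w + f (- w)) \<le> T * (2/9) powr q * norm w powr (2 * q)"
proof -
  define x where "x = (2/3) *\<^sub>R w"
  define y where "y = (-1/3) *\<^sub>R w"
  have xy: "2 *\<^sub>R x + y = w" "x + 2 *\<^sub>R y = 0" "3 *\<^sub>R x = 2 *\<^sub>R w" "3 *\<^sub>R y = - w"
    unfolding x_def y_def by (simp_all add: scaleR_add_left[symmetric] scaleR_diff_left[symmetric])
  have "f (2 *\<^sub>R w) - f w + f (- w) = - (f w - f (2 *\<^sub>R w) - f (- w))"
    by (simp add: algebra_simps)
  then have "norm (f (2 *\<^sub>R w) - f w + f (- w)) = norm (f w - f (2 *\<^sub>R w) - f (- w))"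
    by (simp only: norm_minus_cancel)
  also have "\<dots> \<le> T * norm x powr q * norm y powr q"
    using approx[of x y] f0 unfolding xy by simp
  also have "\<dots> = T * (2/9) powr q * norm w powr (2 * q)"
  proof -
    have "norm x = (2/3) * norm w" "norm y = (1/3) * norm w"
      unfolding x_def y_def by simp_all
    then have "norm x powr q = (2/3) powr q * norm w powr q"
      and "norm y powr q = (1/3) powr q * norm w powr q"
      by (simp_all only: powr_mult[of "2/3" "norm w" q] powr_mult[of "1/3" "norm w" q] norm_ge_zero)
    then have "T * norm x powr q * norm y powr q
        = T * ((2/3) powr q * (1/3) powr q) * (norm w powr q * norm w powr q)"
      by (simp only: mult_ac)
    also have "(2/3) powr q * (1/3) powr q = (2/9::real) powr q"
      using powr_mult[of "2/3" "1/3" q] by simp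
    also have "norm w powr q * norm w powr q = norm w powr (2 * q)"
      by (metis mult_2 powr_add)
    finally show ?thesis by (simp only: mult.assoc)
  qed
  finally show ?thesis .
qed

lemma doubling_bound_of_odd_part_bound:
  fixes f :: "'a::real_normed_vector \<Rightarrow> 'b::real_normed_vector"
  assumes odd: "\<And>w. norm (f (2 *\<^sub>R w) - f w + f (- w)) \<le> C * norm w powr s"
  shows "norm (f (2 *\<^sub>R w) - 2 *\<^sub>R f w) \<le> C * (1 + 2 * (1/2) powr s) * norm w powr s"
proof -
  define v where "v = (1/2::real) *\<^sub>R w"
  have "f (2 *\<^sub>R w) - 2 *\<^sub>R f w
      = (f (2 *\<^sub>R w) - f w + f (- w)) - (f (2 *\<^sub>R v) - f v + f (- v))
        - (f (2 *\<^sub>R (- v)) - f (- v) + f (- (- v)))"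
    unfolding v_def by (simp add: algebra_simps scaleR_2)
  also have "norm \<dots> \<le> C * norm w powr s + C * norm v powr s + C * norm (- v) powr s"
    by (intro order_trans[OF norm_triangle_ineq4] add_mono order_trans[OF norm_triangle_ineq4] odd)
  also have "\<dots> = C * (1 + 2 * (1/2) powr s) * norm w powr s"
  proof -
    have "norm v = (1/2) * norm w" unfolding v_def by simp
    then have "norm v powr s = (1/2) powr s * norm w powr s"
      by (simp only: powr_mult[of "1/2" "norm w" s] norm_ge_zero)
    then show ?thesis by (simp add: algebra_simps)
  qed
  finally show ?thesis .
qed

lemma odd_of_doubling_solution:
  fixes A :: "'a::real_vector \<Rightarrow> 'b::real_vector"
  assumes double: "\<And>x. A (2 *\<^sub>R x) = 2 *\<^sub>R A x"
    and eq: "\<And>x y. A (2 *\<^sub>R x + y) + A (x + 2 *\<^sub>R y) = A (3 *\<^sub>R x) + A (3 *\<^sub>R y)"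
  shows "A (- z) = - A z"
proof -
  have zero: "A 0 = 0" using double[of 0] by (simp add: scaleR_2)
  have "2 *\<^sub>R ((2/3) *\<^sub>R z) + (-1/3) *\<^sub>R z = z" "(2/3) *\<^sub>R z + 2 *\<^sub>R ((-1/3) *\<^sub>R z) = 0"
    "3 *\<^sub>R ((2/3) *\<^sub>R z) = 2 *\<^sub>R z" "3 *\<^sub>R ((-1/3) *\<^sub>R z) = - z"
    by (simp_all add: scaleR_add_left[symmetric] scaleR_diff_left[symmetric])
  then have "A z = 2 *\<^sub>R A z + A (- z)"
    using eq[of "(2/3) *\<^sub>R z" "(-1/3) *\<^sub>R z"] by (simp add: zero double)
  then have "A (- z) = A z - 2 *\<^sub>R A z" by (metis add_diff_cancel_left')
  then show ?thesis by (simp add: scaleR_2)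
qed

lemma additive_of_doubling_solution:
  fixes A :: "'a::real_vector \<Rightarrow> 'b::real_vector"
  assumes double: "\<And>x. A (2 *\<^sub>R x) = 2 *\<^sub>R A x"
    and eq: "\<And>x y. A (2 *\<^sub>R x + y) + A (x + 2 *\<^sub>R y) = A (3 *\<^sub>R x) + A (3 *\<^sub>R y)"
  shows "A (x + y) = A x + A y"
proof -
  have zero: "A 0 = 0" using double[of 0] by (simp add: scaleR_2)
  have three: "3 *\<^sub>R v = 2 *\<^sub>R v + v" for v :: 'b
    using scaleR_add_left[of 2 1 v] by simp
  have triple: "A (3 *\<^sub>R z) = 3 *\<^sub>R A z" for z
    using eq[of z 0] by (simp add: double zero three)
  note odd = odd_of_doubling_solution[OF double eq]
  define z where "z = (1/2::real) *\<^sub>R x"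
  have x: "x = 2 *\<^sub>R z" unfolding z_def by simp
  have "2 *\<^sub>R ((1/3) *\<^sub>R (2 *\<^sub>R z + y)) + (-1/3) *\<^sub>R (z + 2 *\<^sub>R y) = z"
    "(1/3) *\<^sub>R (2 *\<^sub>R z + y) + 2 *\<^sub>R ((-1/3) *\<^sub>R (z + 2 *\<^sub>R y)) = - y"
    "3 *\<^sub>R ((1/3) *\<^sub>R (2 *\<^sub>R z + y)) = 2 *\<^sub>R z + y"
    "3 *\<^sub>R ((-1/3) *\<^sub>R (z + 2 *\<^sub>R y)) = - (z + 2 *\<^sub>R y)"
    by (simp_all add: algebra_simps scaleR_add_left[symmetric] scaleR_diff_left[symmetric])
  then have diff: "A z - A y = A (2 *\<^sub>R z + y) - A (z + 2 *\<^sub>R y)"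
    using eq[of "(1/3) *\<^sub>R (2 *\<^sub>R z + y)" "(-1/3) *\<^sub>R (z + 2 *\<^sub>R y)"] odd[of "z + 2 *\<^sub>R y"] odd[of y]
    by simp
  have sum: "A (2 *\<^sub>R z + y) + A (z + 2 *\<^sub>R y) = 3 *\<^sub>R A z + 3 *\<^sub>R A y"
    using eq[of z y] by (simp add: triple)
  have "A (2 *\<^sub>R z + y) + A (2 *\<^sub>R z + y)
      = (A (2 *\<^sub>R z + y) - A (z + 2 *\<^sub>R y)) + (A (2 *\<^sub>R z + y) + A (z + 2 *\<^sub>R y))"
    by simp
  also have "\<dots> = (2 *\<^sub>R A z + A y) + (2 *\<^sub>R A z + A y)"
    unfolding diff[symmetric] sum by (simp add: three scaleR_2 algebra_simps)
  finally have "A (2 *\<^sub>R z + y) + A (2 *\<^sub>R z + y) = (2 *\<^sub>R A z + A y) + (2 *\<^sub>R A z + A y)" .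
  then show ?thesis unfolding x double by (simp add: scaleR_2[symmetric])
qed

lemma hyers_ulam_additive_approximation:
  fixes f :: "'a::real_normed_vector \<Rightarrow> 'b::banach"
  assumes q: "q < 1/2" and f0: "f 0 = 0"
    and approx: "\<And>x y. norm (f (2 *\<^sub>R x + y) + f (x + 2 *\<^sub>R y) - f (3 *\<^sub>R x) - f (3 *\<^sub>R y))
      \<le> T * norm x powr q * norm y powr q"
  obtains A K where "\<And>x y. A (x + y) = A x + A y"
    and "\<And>x. norm (f x - A x) \<le> K * norm x powr (2 * q)"
proof -
  define C where "C = T * (2/9) powr q * (1 + 2 * (1/2) powr (2 * q))"
  have doubling: "norm (f (2 *\<^sub>R x) - 2 *\<^sub>R f x) \<le> C * norm x powr (2 * q)" for x
    unfolding C_def by (rule doubling_bound_of_odd_part_bound[OF odd_part_bound[OF approx f0]])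
  have s: "2 * q < 1" using q by simp
  note conv = hyers_limit(1)[OF s doubling]
  show ?thesis
  proof
    show "hyers_limit f (x + y) = hyers_limit f x + hyers_limit f y" for x y
      by (rule additive_of_doubling_solution[OF limit_of_scaled_doubling[OF conv]
            limit_solves_equation[OF conv q approx]])
    show "norm (f x - hyers_limit f x) \<le> C / (2 - 2 powr (2 * q)) * norm x powr (2 * q)" for x
      by (rule hyers_limit(2)[OF s doubling])
  qed
qed

section \<open>Approximate Jordan triple derivations\<close>

definition jordan_triple_defect :: "('a::ring \<Rightarrow> 'a) \<Rightarrow> 'a \<Rightarrow> 'a \<Rightarrow> 'a" where
  "jordan_triple_defect f x y = f (x * y * x) - f x * y * x - x * f y * x - x * y * f x"

lemma jordan_triple_defect_diff:
  "jordan_triple_defect A x y = jordan_triple_defect f x y - (f (x * y * x) - A (x * y * x))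
     + (f x - A x) * y * x + x * (f y - A y) * x + x * y * (f x - A x)"
  unfolding jordan_triple_defect_def by (simp add: algebra_simps)

lemma norm_jordan_triple_defect_le:
  fixes f A :: "'a::real_normed_algebra \<Rightarrow> 'a"
  shows "norm (jordan_triple_defect A x y) \<le> norm (jordan_triple_defect f x y)
    + norm (f (x * y * x) - A (x * y * x))
    + norm ((f x - A x) * y * x) + norm (x * (f y - A y) * x) + norm (x * y * (f x - A x))"
  unfolding jordan_triple_defect_diff[of A x y f] by norm

lemma norm_sandwich_diff_le:
  fixes f A :: "'a::real_normed_algebra \<Rightarrow> 'a"
  assumes "jordan_triple_defect A x y = 0"
  shows "norm (x * (f y - A y) * x) \<le> norm (jordan_triple_defect f x y)
    + norm (f (x * y * x) - A (x * y * x)) + norm ((f x - A x) * y * x)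
      + norm (x * y * (f x - A x))"
proof -
  have "x * (f y - A y) * x = (f (x * y * x) - A (x * y * x)) - jordan_triple_defect f x y
      - (f x - A x) * y * x - x * y * (f x - A x)"
    using jordan_triple_defect_diff[of A x y f] assms by (simp add: algebra_simps)
  moreover have "norm ((f (x * y * x) - A (x * y * x)) - jordan_triple_defect f x y
      - (f x - A x) * y * x - x * y * (f x - A x)) \<le> norm (jordan_triple_defect f x y)
      + norm (f (x * y * x) - A (x * y * x)) + norm ((f x - A x) * y * x)
        + norm (x * y * (f x - A x))"
    by norm
  ultimately show ?thesis by simp
qed

lemma nonpos_of_powr_dominated:
  fixes c e e1 e2 e3 b1 b2 b3 :: real
  assumes "e1 < e" "e2 < e" "e3 < e"
    and bound: "\<And>n::nat. n \<ge> 1 \<Longrightarrow>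
      real n powr e * c \<le> b1 * real n powr e1 + b2 * real n powr e2 + b3 * real n powr e3"
  shows "c \<le> 0"
proof -
  define g where "g n = b1 * real n powr (e1 - e) + b2 * real n powr (e2 - e)
      + b3 * real n powr (e3 - e)"
    for n :: nat
  have "eventually (\<lambda>n. c \<le> g n) sequentially"
    using eventually_ge_at_top[of 1]
  proof eventually_elim
    case (elim n)
    have pos: "real n powr e > 0" using elim by simp
    have "real n powr e * c \<le> real n powr e * g n"
      using bound[OF elim] pos by (simp add: g_def powr_diff algebra_simps)
    then show ?case using pos by simp
  qed
  moreover have "g \<longlonglongrightarrow> b1 * 0 + b2 * 0 + b3 * 0"
    unfolding g_def using assms(1-3)
    by (intro tendsto_intros tendsto_neg_powr filterlim_real_sequentially) auto
  ultimately show ?thesis using tendsto_le[OF trivial_limit_sequentially _ tendsto_const] by force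
qed

lemma additive_scaleR_of_nat:
  fixes A :: "'a::real_vector \<Rightarrow> 'b::real_vector"
  assumes "\<And>x y. A (x + y) = A x + A y"
  shows "A (real n *\<^sub>R z) = real n *\<^sub>R A z"
proof -
  have "A 0 = 0" using assms[of 0 0] by simp
  then show ?thesis by (induction n) (simp_all add: assms scaleR_add_left)
qed

lemma norm_mult3_le:
  fixes a b c :: "'a::real_normed_algebra"
  assumes "norm a \<le> \<alpha>" "norm b \<le> \<beta>" "norm c \<le> \<gamma>"
  shows "norm (a * b * c) \<le> \<alpha> * \<beta> * \<gamma>"
proof -
  have "norm (a * b * c) \<le> norm a * norm b * norm c"
    by (meson norm_mult_ineq mult_right_mono norm_ge_zero order_trans)
  also have "\<dots> \<le> \<alpha> * \<beta> * \<gamma>"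
  proof -
    have "0 \<le> \<alpha>" "0 \<le> \<beta>" using assms(1,2) norm_ge_zero order_trans by blast+
    then show ?thesis using assms by (intro mult_mono) auto
  qed
  finally show ?thesis .
qed

lemma approximation_scaleR:
  fixes f A :: "'a::real_normed_vector \<Rightarrow> 'b::real_normed_vector"
  assumes "\<And>x. norm (f x - A x) \<le> K * norm x powr s" and "t \<ge> 0"
  shows "norm (f (t *\<^sub>R z) - A (t *\<^sub>R z)) \<le> K * norm z powr s * t powr s"
  using assms(1)[of "t *\<^sub>R z"] assms(2) by (simp add: powr_mult mult_ac)

lemma jordan_triple_defect_growth:
  fixes f A :: "'a::real_normed_algebra \<Rightarrow> 'a"
  assumes approx: "\<And>x y. norm (jordan_triple_defect f x y) \<le> \<Theta> * norm x powr p * norm y powr p"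
    and close: "\<And>x. norm (f x - A x) \<le> K * norm x powr s"
  obtains b1 b2 b3 where "\<And>t. t > 0 \<Longrightarrow> norm (jordan_triple_defect A (t *\<^sub>R x) (t *\<^sub>R y))
    \<le> b1 * t powr (2 * p) + b2 * t powr (3 * s) + b3 * t powr (s + 2)"
proof -
  define b1 where "b1 = \<Theta> * norm x powr p * norm y powr p"
  define b2 where "b2 = K * norm (x * y * x) powr s"
  define b3 where "b3 = 2 * (K * norm x powr s * norm y * norm x)
      + K * norm x * norm y powr s * norm x"
  show ?thesis
  proof (rule that[of b1 b2 b3])
    fix t :: real assume t: "t > 0"
    define X where "X = t *\<^sub>R x"
    define Y where "Y = t *\<^sub>R y"
    have nX: "norm X = t * norm x" and nY: "norm Y = t * norm y" using t unfolding X_def Y_def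
      by simp_all
    have cX: "norm (f X - A X) \<le> K * norm x powr s * t powr s"
      and cY: "norm (f Y - A Y) \<le> K * norm y powr s * t powr s"
      unfolding X_def Y_def using t by (simp_all add: approximation_scaleR[OF close])
    have "norm (jordan_triple_defect f X Y) \<le> b1 * t powr (2 * p)"
      using approx[of X Y] t unfolding nX nY b1_def mult_2 powr_add by (simp add: powr_mult mult_ac)
    moreover have "norm (f (X * Y * X) - A (X * Y * X)) \<le> b2 * t powr (3 * s)"
    proof -
      have "X * Y * X = (t ^ 3) *\<^sub>R (x * y * x)" unfolding X_def Y_def by (simp add: power3_eq_cube)
      moreover have "t ^ 3 = t powr 3" using t by simp
      then have "(t ^ 3) powr s = t powr (3 * s)" by (simp only: powr_powr)
      ultimately show ?thesis using approximation_scaleR[OF close, of "t ^ 3" "x * y * x"] t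
        unfolding b2_def by simp
    qed
    moreover have "norm ((f X - A X) * Y * X) + norm (X * (f Y - A Y) * X)
        + norm (X * Y * (f X - A X))
        \<le> b3 * t powr (s + 2)"
    proof -
      have "t powr (s + 2) = t powr s * t * t" using t
        by (simp add: powr_add power2_eq_square mult.assoc)
      then show ?thesis
        using norm_mult3_le[OF cX order_refl order_refl, of Y X]
          norm_mult3_le[OF order_refl cY order_refl, of X X]
          norm_mult3_le[OF order_refl order_refl cX, of X Y]
        unfolding b3_def nX nY by (simp add: algebra_simps)
    qed
    moreover note norm_jordan_triple_defect_le[of A X Y f]
    ultimately show "norm (jordan_triple_defect A X Y)
        \<le> b1 * t powr (2 * p) + b2 * t powr (3 * s) + b3 * t powr (s + 2)"
      by linarith
  qed
qed

lemma jordan_triple_of_approximation: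
  fixes f A :: "'a::real_normed_algebra \<Rightarrow> 'a"
  assumes p: "p < 3/2" and s: "s < 1"
    and approx: "\<And>x y. norm (jordan_triple_defect f x y) \<le> \<Theta> * norm x powr p * norm y powr p"
    and add: "\<And>x y. A (x + y) = A x + A y"
    and close: "\<And>x. norm (f x - A x) \<le> K * norm x powr s"
  shows "jordan_triple_defect A x y = 0"
proof -
  obtain b1 b2 b3 where growth: "\<And>t. t > 0 \<Longrightarrow> norm (jordan_triple_defect A (t *\<^sub>R x) (t *\<^sub>R y))
      \<le> b1 * t powr (2 * p) + b2 * t powr (3 * s) + b3 * t powr (s + 2)"
    using jordan_triple_defect_growth[OF approx close] by blast
  have "norm (jordan_triple_defect A x y) \<le> 0"
  proof (rule nonpos_of_powr_dominated[of "2 * p" 3 "3 * s" "s + 2"])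
    show "2 * p < 3" "3 * s < 3" "s + 2 < 3" using p s by auto
    fix n :: nat assume "n \<ge> 1"
    have "A (real k *\<^sub>R z) = real k *\<^sub>R A z" for k z by (rule additive_scaleR_of_nat[OF add])
    then have "jordan_triple_defect A (real n *\<^sub>R x) (real n *\<^sub>R y)
        = real (n ^ 3) *\<^sub>R jordan_triple_defect A x y"
      unfolding jordan_triple_defect_def by (simp add: power3_eq_cube algebra_simps flip: scaleR_scaleR)
    then show "real n powr 3 * norm (jordan_triple_defect A x y)
        \<le> b1 * real n powr (2 * p) + b2 * real n powr (3 * s) + b3 * real n powr (s + 2)"
      using growth[of "real n"] \<open>n \<ge> 1\<close> by (simp add: powr_realpow)
  qed
  then show ?thesis by simp
qed

lemma approximation_growth_of_jordan_triple:
  fixes f A :: "'a::{real_normed_algebra, ring_1} \<Rightarrow> 'a"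
  assumes approx: "\<And>x y. norm (jordan_triple_defect f x y) \<le> \<Theta> * norm x powr p * norm y powr p"
    and close: "\<And>x. norm (f x - A x) \<le> K * norm x powr s"
    and exact: "\<And>x y. jordan_triple_defect A x y = 0"
  obtains b1 b2 b3 where "\<And>t. t > 0 \<Longrightarrow> norm ((t *\<^sub>R 1) * (f y - A y) * (t *\<^sub>R 1))
    \<le> b1 * t powr p + b2 * t powr (2 * s) + b3 * t powr (s + 1)"
proof -
  define b1 where "b1 = \<Theta> * norm (1::'a) powr p * norm y powr p"
  define b2 where "b2 = K * norm y powr s"
  define b3 where "b3 = 2 * (K * norm (1::'a) powr s * norm y * norm (1::'a))"
  show ?thesis
  proof (rule that[of b1 b2 b3])
    fix t :: real assume t: "t > 0"
    define X where "X = t *\<^sub>R (1::'a)"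
    have nX: "norm X = t * norm (1::'a)" using t unfolding X_def by simp
    have cX: "norm (f X - A X) \<le> K * norm (1::'a) powr s * t powr s"
      unfolding X_def using t by (simp add: approximation_scaleR[OF close])
    have "norm (jordan_triple_defect f X y) \<le> b1 * t powr p"
      using approx[of X y] t unfolding nX b1_def by (simp add: powr_mult mult_ac)
    moreover have "norm (f (X * y * X) - A (X * y * X)) \<le> b2 * t powr (2 * s)"
    proof -
      have "(t * t) powr s = t powr s * t powr s" using t by (simp add: powr_mult)
      also have "\<dots> = t powr (2 * s)" by (metis mult_2 powr_add)
      moreover have "X * y * X = (t * t) *\<^sub>R y" unfolding X_def by simp
      ultimately show ?thesis using approximation_scaleR[OF close, of "t * t" y] t
        unfolding b2_def by simp
    qed
    moreover have "norm ((f X - A X) * y * X) + norm (X * y * (f X - A X)) \<le> b3 * t powr (s + 1)"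
      using norm_mult3_le[OF cX order_refl order_refl, of y X]
        norm_mult3_le[OF order_refl order_refl cX, of X y]
        t unfolding b3_def nX by (simp add: powr_add algebra_simps)
    moreover note norm_sandwich_diff_le[OF exact[of X y], of f]
    ultimately show "norm (X * (f y - A y) * X)
        \<le> b1 * t powr p + b2 * t powr (2 * s) + b3 * t powr (s + 1)"
      by linarith
  qed
qed

lemma eq_of_approximation_by_jordan_triple:
  fixes f A :: "'a::{real_normed_algebra, ring_1} \<Rightarrow> 'a"
  assumes p: "p < 2" and s: "s < 1"
    and approx: "\<And>x y. norm (jordan_triple_defect f x y) \<le> \<Theta> * norm x powr p * norm y powr p"
    and close: "\<And>x. norm (f x - A x) \<le> K * norm x powr s"
    and exact: "\<And>x y. jordan_triple_defect A x y = 0"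
  shows "f y = A y"
proof -
  obtain b1 b2 b3 where growth: "\<And>t. t > 0 \<Longrightarrow> norm ((t *\<^sub>R 1) * (f y - A y) * (t *\<^sub>R 1))
      \<le> b1 * t powr p + b2 * t powr (2 * s) + b3 * t powr (s + 1)"
    using approximation_growth_of_jordan_triple[OF approx close exact] by blast
  have "norm (f y - A y) \<le> 0"
  proof (rule nonpos_of_powr_dominated[of p 2 "2 * s" "s + 1"])
    show "p < 2" "2 * s < 2" "s + 1 < 2" using p s by auto
    fix n :: nat assume "n \<ge> 1"
    then show "real n powr 2 * norm (f y - A y)
        \<le> b1 * real n powr p + b2 * real n powr (2 * s) + b3 * real n powr (s + 1)"
      using growth[of "real n"] by (simp add: power2_eq_square)
  qed
  then show ?thesis by simp
qed

section \<open>Complex homogeneity from homogeneity on a circle sector\<close>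

interpretation scaleC: module "scaleC :: complex \<Rightarrow> 'a::complex_banach_algebra_1 \<Rightarrow> 'a"
  by standard (rule scaleC_add_right scaleC_add_left scaleC_scaleC scaleC_one)+

lemma scaleC_numeral: "(numeral k :: complex) *\<^sub>C x = numeral k *\<^sub>R (x::'a::complex_banach_algebra_1)"
  by (metis of_real_numeral scaleR_scaleC)

lemma one_in_circle_sector: "1 \<in> circle_sector n0"
  unfolding circle_sector_def by (rule CollectI, rule exI[of _ 0]) simp

lemma homogeneous_of_approximation:
  fixes f :: "'a::complex_banach_algebra_1 \<Rightarrow> 'b::complex_banach_algebra_1"
  assumes add: "\<And>x y. f (x + y) = f x + f y"
    and approx: "\<And>x y. norm (f ((2 * \<mu>) *\<^sub>C x + \<mu> *\<^sub>C y) + f (\<mu> *\<^sub>C x + (2 * \<mu>) *\<^sub>C y)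
                 - \<mu> *\<^sub>C (f (3 *\<^sub>C x) + f (3 *\<^sub>C y))) \<le> \<theta> * norm x powr q * norm y powr q"
  shows "f (\<mu> *\<^sub>C z) = \<mu> *\<^sub>C f z"
proof -
  define x where "x = (1/3 :: complex) *\<^sub>C z"
  have f0: "f 0 = 0" using add[of 0 0] by simp
  \<comment> \<open>The bound vanishes at y = 0, since 0 powr q = 0 for every q.\<close>
  have "f ((2 * \<mu>) *\<^sub>C x) + f (\<mu> *\<^sub>C x) = \<mu> *\<^sub>C f (3 *\<^sub>C x)"
    using approx[of x 0] by (simp add: f0)
  moreover have "f ((2 * \<mu>) *\<^sub>C x) + f (\<mu> *\<^sub>C x) = f (\<mu> *\<^sub>C z)"
    unfolding add[symmetric] x_def by (simp flip: scaleC_add_left)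
  ultimately show ?thesis unfolding x_def by simp
qed

lemma cis_homogeneous_of_sector_homogeneous:
  fixes f :: "'a::complex_banach_algebra_1 \<Rightarrow> 'b::complex_banach_algebra_1"
  assumes n0: "n0 > 0"
    and sector: "\<And>\<mu> z. \<mu> \<in> circle_sector n0 \<Longrightarrow> f (\<mu> *\<^sub>C z) = \<mu> *\<^sub>C f z"
    and t: "0 \<le> t"
  shows "f (cis t *\<^sub>C z) = cis t *\<^sub>C f z"
proof -
  define \<epsilon> where "\<epsilon> = 2 * pi / real n0"
  have \<epsilon>: "\<epsilon> > 0" unfolding \<epsilon>_def using n0 by simp
  have step: "f (cis s *\<^sub>C z) = cis s *\<^sub>C f z" if "0 \<le> s" "s \<le> \<epsilon>" for s z
    using sector[of "cis s"] that unfolding \<epsilon>_def circle_sector_def by blast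
  have "f (cis s *\<^sub>C z) = cis s *\<^sub>C f z" if "0 \<le> s" "s \<le> real k * \<epsilon>" for k s z
    using that
  proof (induction k arbitrary: s z)
    case 0
    then show ?case by simp
  next
    case (Suc k)
    show ?case
    proof (cases "s \<le> \<epsilon>")
      case True
      then show ?thesis using Suc.prems step by blast
    next
      case False
      then have rest: "0 \<le> s - \<epsilon>" "s - \<epsilon> \<le> real k * \<epsilon>" using Suc.prems by (auto simp: algebra_simps)
      have "f (cis s *\<^sub>C z) = f (cis \<epsilon> *\<^sub>C (cis (s - \<epsilon>) *\<^sub>C z))" by (simp add: cis_mult)
      also have "\<dots> = cis \<epsilon> *\<^sub>C (cis (s - \<epsilon>) *\<^sub>C f z)"
        by (simp only: step[OF less_imp_le[OF \<epsilon>] order_refl] Suc.IH[OF rest])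
      also have "\<dots> = cis s *\<^sub>C f z" by (simp add: cis_mult)
      finally show ?thesis .
    qed
  qed
  moreover obtain k :: nat where "t / \<epsilon> \<le> real k" using real_arch_simple by blast
  then have "t \<le> real k * \<epsilon>" using \<epsilon> by (simp add: divide_le_eq)
  ultimately show ?thesis using t by blast
qed

lemma complex_homogeneous_of_cis_homogeneous:
  fixes f :: "'a::complex_banach_algebra_1 \<Rightarrow> 'b::complex_banach_algebra_1"
  assumes add: "\<And>x y. f (x + y) = f x + f y"
    and cis: "\<And>t z. 0 \<le> t \<Longrightarrow> f (cis t *\<^sub>C z) = cis t *\<^sub>C f z"
  shows "f (c *\<^sub>C z) = c *\<^sub>C f z"
proof -
  have f0: "f 0 = 0" using add[of 0 0] by simp
  have nat: "f (of_nat m *\<^sub>C z) = of_nat m *\<^sub>C f z" for m z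
    by (induction m) (simp_all add: f0 add scaleC_add_left)
  have small: "f (complex_of_real r *\<^sub>C z) = complex_of_real r *\<^sub>C f z" if "\<bar>r\<bar> \<le> 2" for r z
  proof -
    define s where "s = arccos (r / 2)"
    have s: "0 \<le> s" "s \<le> pi" "cos s = r / 2"
      unfolding s_def using that by (auto intro: arccos_lbound arccos_ubound cos_arccos)
    have r: "complex_of_real r = cis s + cis (2 * pi - s)"
      by (rule complex_eqI) (simp_all add: s cos_diff sin_diff)
    show ?thesis unfolding r scaleC_add_left add using s by (simp add: cis)
  qed
  have real: "f (complex_of_real r *\<^sub>C z) = complex_of_real r *\<^sub>C f z" for r z
  proof -
    obtain k :: nat where "\<bar>r\<bar> \<le> real k" using real_arch_simple by blast
    then obtain m :: nat where m: "\<bar>r\<bar> \<le> real m" "m > 0" by (intro that[of "Suc k"]) auto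
    then have small_r: "\<bar>r / real m\<bar> \<le> 2" by (simp add: divide_le_eq)
    have "f (complex_of_real r *\<^sub>C z) = f (of_nat m *\<^sub>C (complex_of_real (r / real m) *\<^sub>C z))"
      using m by simp
    also have "\<dots> = of_nat m *\<^sub>C (complex_of_real (r / real m) *\<^sub>C f z)"
      by (simp only: nat small[OF small_r])
    also have "\<dots> = complex_of_real r *\<^sub>C f z" using m by simp
    finally show ?thesis .
  qed
  have c: "c = complex_of_real (Re c) + complex_of_real (Im c) * cis (pi / 2)"
    by (rule complex_eqI) simp_all
  have "f (c *\<^sub>C z) = f (complex_of_real (Re c) *\<^sub>C z
      + complex_of_real (Im c) *\<^sub>C (cis (pi / 2) *\<^sub>C z))"
    by (subst (1) c) (simp add: scaleC_add_left)
  also have "\<dots> = complex_of_real (Re c) *\<^sub>C f z + complex_of_real (Im c) *\<^sub>C (cis (pi / 2) *\<^sub>C f z)"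
    by (simp only: add real cis[OF pi_half_ge_zero])
  also have "\<dots> = c *\<^sub>C f z" by (subst (3) c) (simp add: scaleC_add_left)
  finally show ?thesis .
qed

theorem corollary2p12:
  fixes f :: "'a::complex_banach_algebra_1 \<Rightarrow> 'a"
    and n0 :: nat and p q \<theta> :: real
  assumes "n0 > 0"
    and "semiprime_ring TYPE('a)"
    and "p < 3/2" and "q < 1/2"
    and "\<And>x y. norm (f (x * y * x) - f x * y * x - x * f y * x - x * y * f x)
                 \<le> \<theta> * norm x powr p * norm y powr p"
    and "\<And>x y \<mu>. \<mu> \<in> circle_sector n0 \<Longrightarrow>
           norm (f ((2 * \<mu>) *\<^sub>C x + \<mu> *\<^sub>C y) + f (\<mu> *\<^sub>C x + (2 * \<mu>) *\<^sub>C y)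
                 - \<mu> *\<^sub>C (f (3 *\<^sub>C x) + f (3 *\<^sub>C y)))
             \<le> \<theta> * norm x powr q * norm y powr q"
  shows "linear_derivation f"
proof -
  have approx_triple: "norm (jordan_triple_defect f x y)
      \<le> \<theta> * norm x powr p * norm y powr p" for x y
    unfolding jordan_triple_defect_def by (rule assms(5))
  have f0: "f 0 = 0" using approx_triple[of 0 0] by (simp add: jordan_triple_defect_def)
  have "norm (f (2 *\<^sub>R x + y) + f (x + 2 *\<^sub>R y) - f (3 *\<^sub>R x) - f (3 *\<^sub>R y))
      \<le> \<theta> * norm x powr q * norm y powr q" for x y
    using assms(6)[OF one_in_circle_sector, of x y] by (simp add: scaleC_numeral diff_diff_add)
  then obtain A K where A_add: "\<And>x y. A (x + y) = A x + A y"
    and close: "\<And>x. norm (f x - A x) \<le> K * norm x powr (2 * q)"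
    using hyers_ulam_additive_approximation[where f = f, OF \<open>q < 1/2\<close> f0] by blast
  have s: "2 * q < 1" using \<open>q < 1/2\<close> by simp
  have A_triple: "jordan_triple_defect A x y = 0" for x y
    by (rule jordan_triple_of_approximation[OF \<open>p < 3/2\<close> s approx_triple A_add close])
  have "f x = A x" for x
    using \<open>p < 3/2\<close>
    by (intro eq_of_approximation_by_jordan_triple[OF _ s approx_triple close A_triple]) simp
  then have f_add: "f (x + y) = f x + f y"
    and f_triple: "f (x * y * x) = f x * y * x + x * f y * x + x * y * f x" for x y
    using A_add A_triple[of x y] by (simp_all add: jordan_triple_defect_def diff_diff_eq)
  have "f (c *\<^sub>C z) = c *\<^sub>C f z" for c z
    by (rule complex_homogeneous_of_cis_homogeneous[OF f_add cis_homogeneous_of_sector_homogeneous[OF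
          \<open>n0 > 0\<close> homogeneous_of_approximation[OF f_add assms(6)]]])
  then show ?thesis unfolding linear_derivation_def
    using f_add derivation_of_jordan_triple_derivation[OF assms(2) f_add f_triple] by blast
qed

end
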